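(* Let $(M,g,J)$ be almost Hermitian of even complex dimension $m=2n$, $n\ge1$, with a complex spinor bundle $S^cM$ of a spin$^c$ structure. Set $$\alpha_1=\sqrt{\tfrac{m-1}{m+1}},\ \ \beta_1=m+1-(m+2)\alpha_1,\ \ \alpha_2=\sqrt{\tfrac{m+1}{m-1}},\ \ \beta_2=m+1-m\alpha_2,$$ $$\mathfrak{T}_X=\mathbf{i}\big(\alpha_1X^{1,0}\cdot\pi_{n-1}+\alpha_2X^{0,1}\cdot\pi_n+\beta_1X^{1,0}\cdot\pi_{n-2}+\beta_2X^{0,1}\cdot\pi_{n+1}\big),$$ $$\mathcal{T}=-\mathbf{i}(m+1)+\mathbf{i}\beta_1\pi_{n-1}+\mathbf{i}\beta_2\pi_n.$$ Then for every vector field $X$ the endomorphism $\mathfrak{T}_X+\gamma(X)\mathcal{T}$ of $S^cM$ is selfadjoint, and for any orthonormal frame $e_1,\dots,e_{2m}$, $$\mathcal{T}':=\sum_{j=1}^{2m}e_j\cdot\mathfrak{T}_{e_j}=\mathcal{T}\circ\mathrm{pr}_{\mathcal{V}}-\mathbf{i}\beta_1(m+4)\pi_{n-2}-\mathbf{i}\beta_2(m+2)\pi_{n+1}.$$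
   Context: $\Omega=g(\cdot,J\cdot)$; Clifford multiplication is $\gamma$ or $\cdot$; $S^cM=S_0\oplus\cdots\oplus S_m$ with $S_j$ the eigenbundle of $\gamma(\Omega)$ for eigenvalue $\mathbf{i}(m-2j)$ and orthogonal projections $\pi_j$ ($\pi_j=0$ if $j\notin\{0,\dots,m\}$). $X^{1,0}=\frac12(X-\mathbf{i}JX)$, $X^{0,1}=\frac12(X+\mathbf{i}JX)$. $\mathcal{V}=S_{n-1}\oplus S_n$ and $\mathrm{pr}_{\mathcal{V}}=\pi_{n-1}+\pi_n$. *)

theory Defs
  imports "HOL-Analysis.Analysis"
begin

text \<open>Pointwise (fibrewise) model. Tangent space at a point: a Euclidean space 'a
  (inner product = g), of real dimension 2m. Spinor fibre: complex^'s with its standard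
  Hermitian product (an orthonormal frame of the fibre), of complex dimension 2^m.\<close>

definition cmat_adj :: "complex^'s^'s \<Rightarrow> complex^'s^'s" where
  "cmat_adj A = (\<chi> i j. cnj (A $ j $ i))"

definition cmat_smult :: "complex \<Rightarrow> complex^'s^'s \<Rightarrow> complex^'s^'s" (infixr "*c" 75) where
  "c *c A = (\<chi> i j. c * A $ i $ j)"

definition selfadjoint :: "complex^'s^'s \<Rightarrow> bool" where
  "selfadjoint A \<longleftrightarrow> cmat_adj A = A"

definition almost_hermitian :: "('a::euclidean_space \<Rightarrow> 'a) \<Rightarrow> bool" where
  "almost_hermitian J \<longleftrightarrow> linear J \<and> (\<forall>x. J (J x) = - x) \<and> (\<forall>x y. inner (J x) (J y) = inner x y)"

definition clifford_mult :: "('a::euclidean_space \<Rightarrow> complex^'s^'s) \<Rightarrow> bool" where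
  "clifford_mult gam \<longleftrightarrow>
     (\<forall>x y. gam (x + y) = gam x + gam y) \<and>
     (\<forall>r x. gam (r *\<^sub>R x) = complex_of_real r *c gam x) \<and>
     (\<forall>x. gam x ** gam x = - (complex_of_real ((norm x)\<^sup>2) *c mat 1)) \<and>
     (\<forall>x. cmat_adj (gam x) = - gam x)"

text \<open>Fundamental 2-form and its Clifford action
  gamma(Omega) = sum_{j<k} Omega(e_j,e_k) e_j . e_k  (written as half of the double sum).\<close>
definition Omega :: "('a::euclidean_space \<Rightarrow> 'a) \<Rightarrow> 'a \<Rightarrow> 'a \<Rightarrow> real" where
  "Omega J x y = inner x (J y)"

definition gamma_Omega :: "('a::euclidean_space \<Rightarrow> complex^'s^'s) \<Rightarrow> ('a \<Rightarrow> 'a) \<Rightarrow> complex^'s^'s" where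
  "gamma_Omega gam J = (1/2) *c (\<Sum>b\<in>Basis. \<Sum>c\<in>Basis. complex_of_real (Omega J b c) *c (gam b ** gam c))"

definition eig_proj :: "complex^'s^'s \<Rightarrow> complex \<Rightarrow> complex^'s^'s" where
  "eig_proj A lam = (THE P. P ** P = P \<and> cmat_adj P = P \<and>
                       {v. P *v v = v} = {v. A *v v = lam *s v})"

definition spin_pi :: "('a::euclidean_space \<Rightarrow> complex^'s^'s) \<Rightarrow> ('a \<Rightarrow> 'a) \<Rightarrow> nat \<Rightarrow> int \<Rightarrow> complex^'s^'s" where
  "spin_pi gam J m j = (if 0 \<le> j \<and> j \<le> int m
      then eig_proj (gamma_Omega gam J) (\<i> * of_int (int m - 2 * j)) else 0)"

text \<open>Clifford action of X^{1,0} and X^{0,1} (complex-linear extension).\<close>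
definition gam10 :: "('a::euclidean_space \<Rightarrow> complex^'s^'s) \<Rightarrow> ('a \<Rightarrow> 'a) \<Rightarrow> 'a \<Rightarrow> complex^'s^'s" where
  "gam10 gam J X = (1/2) *c (gam X - \<i> *c gam (J X))"

definition gam01 :: "('a::euclidean_space \<Rightarrow> complex^'s^'s) \<Rightarrow> ('a \<Rightarrow> 'a) \<Rightarrow> 'a \<Rightarrow> complex^'s^'s" where
  "gam01 gam J X = (1/2) *c (gam X + \<i> *c gam (J X))"

definition alpha1 :: "nat \<Rightarrow> real" where "alpha1 m = sqrt ((real m - 1) / (real m + 1))"
definition beta1  :: "nat \<Rightarrow> real" where "beta1 m = real m + 1 - (real m + 2) * alpha1 m"
definition alpha2 :: "nat \<Rightarrow> real" where "alpha2 m = sqrt ((real m + 1) / (real m - 1))"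
definition beta2  :: "nat \<Rightarrow> real" where "beta2 m = real m + 1 - real m * alpha2 m"

definition frakT :: "('a::euclidean_space \<Rightarrow> complex^'s^'s) \<Rightarrow> ('a \<Rightarrow> 'a) \<Rightarrow> nat \<Rightarrow> 'a \<Rightarrow> complex^'s^'s" where
  "frakT gam J n X = (let m = 2 * n; p = spin_pi gam J m in
     \<i> *c (complex_of_real (alpha1 m) *c (gam10 gam J X ** p (int n - 1))
        + complex_of_real (alpha2 m) *c (gam01 gam J X ** p (int n))
        + complex_of_real (beta1 m) *c (gam10 gam J X ** p (int n - 2))
        + complex_of_real (beta2 m) *c (gam01 gam J X ** p (int n + 1))))"

definition calT :: "('a::euclidean_space \<Rightarrow> complex^'s^'s) \<Rightarrow> ('a \<Rightarrow> 'a) \<Rightarrow> nat \<Rightarrow> complex^'s^'s" where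
  "calT gam J n = (let m = 2 * n; p = spin_pi gam J m in
     (- \<i> * of_nat (m + 1)) *c mat 1
     + (\<i> * complex_of_real (beta1 m)) *c p (int n - 1)
     + (\<i> * complex_of_real (beta2 m)) *c p (int n))"

definition prV :: "('a::euclidean_space \<Rightarrow> complex^'s^'s) \<Rightarrow> ('a \<Rightarrow> 'a) \<Rightarrow> nat \<Rightarrow> complex^'s^'s" where
  "prV gam J n = spin_pi gam J (2 * n) (int n - 1) + spin_pi gam J (2 * n) (int n)"

end

(*
  gamma(Omega) is skew-adjoint and [gamma(Omega), X] = -2 JX, so X^{1,0} and X^{0,1} shift its
  eigenvalue i(m-2j) by -2i and +2i.  Since sum_b (b^{1,0})^* b^{1,0} = m - i gamma(Omega) and
  sum_b (b^{0,1})^* b^{0,1} = m + i gamma(Omega) are positive, the spectrum of gamma(Omega) lies in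
  i[-m, m]; hence X^{1,0} maps S_j into S_{j+1} and X^{0,1} maps S_j into S_{j-1} also at the ends
  of the range, i.e. pi_j X^{1,0} = X^{1,0} pi_{j-1} and pi_j X^{0,1} = X^{0,1} pi_{j+1}.
  With these rules the adjoint of frakT_X + X.T is again a combination of the terms
  X^{1,0} pi_k, X^{0,1} pi_k, and selfadjointness reduces to alpha1 + beta1 = alpha2 + beta2.
  For the frame sum, sum_j e_j . e_j^{1,0} = -m + i gamma(Omega) and
  sum_j e_j . e_j^{0,1} = -m - i gamma(Omega) for every orthonormal frame, and gamma(Omega) acts on
  S_j by i(m-2j).  The argument is pointwise and does not use the rank of the spinor fibre.
*)

theory Submission
  imports Defs
begin

section \<open>Complex matrices\<close>

lemma cmat_smult_nth [simp]: "(c *c A) $ i $ j = c * A $ i $ j"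
  by (simp add: cmat_smult_def)

lemma cmat_adj_nth [simp]: "cmat_adj A $ i $ j = cnj (A $ j $ i)"
  by (simp add: cmat_adj_def)

lemma cmat_smult_mult_left: "(c *c A) ** B = c *c (A ** B)"
  by (simp add: vec_eq_iff matrix_matrix_mult_def sum_distrib_left mult.assoc)

lemma cmat_smult_mult_right: "A ** (c *c B) = c *c (A ** B)"
  by (simp add: vec_eq_iff matrix_matrix_mult_def sum_distrib_left ac_simps)

lemma cmat_smult_add_right: "c *c (A + B) = c *c A + c *c B"
  by (simp add: vec_eq_iff algebra_simps)

lemma cmat_smult_zero_left [simp]: "0 *c A = 0"
  by (simp add: vec_eq_iff)

lemma cmat_smult_zero_right [simp]: "c *c 0 = 0"
  by (simp add: vec_eq_iff)

lemma cmat_smult_one [simp]: "1 *c A = A"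
  by (simp add: vec_eq_iff)

lemma cmat_smult_sum_left: "(\<Sum>x\<in>S. c x) *c A = (\<Sum>x\<in>S. c x *c A)"
  by (induct S rule: infinite_finite_induct) (auto simp: vec_eq_iff algebra_simps)

lemma cmat_smult_diff_right: "c *c (A - B) = c *c A - c *c B"
  by (simp add: vec_eq_iff algebra_simps)

lemma cmat_smult_assoc: "c *c (d *c A) = (c * d) *c A"
  by (simp add: vec_eq_iff)

lemma cmat_smult_of_real: "complex_of_real r *c A = r *\<^sub>R A"
  by (simp add: vec_eq_iff) (simp add: scaleR_conv_of_real)

lemma cmat_smult_sum: "c *c (\<Sum>x\<in>S. f x) = (\<Sum>x\<in>S. c *c f x)"
  by (induct S rule: infinite_finite_induct) (auto simp: cmat_smult_add_right vec_eq_iff)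

lemma cmat_smult_matrix_vector_mult: "(c *c A) *v v = c *s (A *v v)"
  by (simp add: vec_eq_iff matrix_vector_mult_def sum_distrib_left mult.assoc)

lemma matrix_vector_mult_smult: "(A :: complex^'n^'m) *v (c *s v) = c *s (A *v v)"
  by (simp add: vec_eq_iff matrix_vector_mult_def sum_distrib_left mult.left_commute)

lemma matrix_add_rdistrib: "(A + B) ** C = A ** C + B ** C"
  by (simp add: vec_eq_iff matrix_matrix_mult_def algebra_simps sum.distrib)

lemma matrix_diff_ldistrib: "C ** (A - B) = C ** A - C ** (B :: 'b::ring_1^'n^'n)"
  by (simp add: vec_eq_iff matrix_matrix_mult_def algebra_simps sum_subtractf)

lemma matrix_diff_rdistrib: "(A - B) ** (C :: 'b::ring_1^'n^'n) = A ** C - B ** C"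
  by (simp add: vec_eq_iff matrix_matrix_mult_def algebra_simps sum_subtractf)

lemma matrix_minus_left: "(- A) ** (C :: 'b::ring_1^'n^'n) = - (A ** C)"
  by (simp add: vec_eq_iff matrix_matrix_mult_def sum_negf)

lemma matrix_minus_right: "C ** (- A) = - (C ** (A :: 'b::ring_1^'n^'n))"
  by (simp add: vec_eq_iff matrix_matrix_mult_def sum_negf)

lemma matrix_sum_left: "(\<Sum>x\<in>S. f x) ** B = (\<Sum>x\<in>S. f x ** B)"
  by (induct S rule: infinite_finite_induct) (auto simp: matrix_add_rdistrib)

lemma matrix_sum_right: "B ** (\<Sum>x\<in>S. f x) = (\<Sum>x\<in>S. B ** f x)"
  by (induct S rule: infinite_finite_induct) (auto simp: matrix_add_ldistrib)

lemma matrix_vector_mult_minus_left: "(- A) *v v = - (A *v (v :: 'b::ring_1^'n))"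
  by (simp add: vec_eq_iff matrix_vector_mult_def sum_negf)

lemma matrix_vector_mult_sum_left: "(\<Sum>x\<in>S. f x) *v v = (\<Sum>x\<in>S. f x *v v)"
  by (induct S rule: infinite_finite_induct) (auto simp: matrix_vector_mult_add_rdistrib)

lemma bilinear_matrix_mult_compose:
  fixes f g :: "'a::real_vector \<Rightarrow> 'b::real_algebra_1^'n^'n"
  assumes "linear f" "linear g"
  shows "bilinear (\<lambda>x y. f x ** g y)"
  using assms
  by (simp add: bilinear_def linear_iff matrix_add_ldistrib matrix_add_rdistrib
      scalar_matrix_assoc matrix_scalar_ac)

lemma cmat_adj_add: "cmat_adj (A + B) = cmat_adj A + cmat_adj B"
  by (simp add: vec_eq_iff)

lemma cmat_adj_diff: "cmat_adj (A - B) = cmat_adj A - cmat_adj B"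
  by (simp add: vec_eq_iff)

lemma cmat_adj_smult: "cmat_adj (c *c A) = cnj c *c cmat_adj A"
  by (simp add: vec_eq_iff)

lemma cmat_adj_zero [simp]: "cmat_adj 0 = 0"
  by (simp add: vec_eq_iff)

lemma cmat_adj_adj [simp]: "cmat_adj (cmat_adj A) = A"
  by (simp add: vec_eq_iff)

lemma cmat_adj_mat [simp]: "cmat_adj (mat c) = mat (cnj c)"
  by (simp add: vec_eq_iff mat_def)

lemma cmat_adj_mult: "cmat_adj (A ** B) = cmat_adj B ** cmat_adj A"
  by (simp add: vec_eq_iff matrix_matrix_mult_def mult.commute)

lemma cmat_adj_sum: "cmat_adj (\<Sum>x\<in>S. f x) = (\<Sum>x\<in>S. cmat_adj (f x))"
  by (induct S rule: infinite_finite_induct) (auto simp: cmat_adj_add vec_eq_iff)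

lemma inner_cvec_smult: "inner (c *s z) (w :: complex^'n) = inner z (cnj c *s w)"
  by (simp add: inner_vec_def inner_complex_def algebra_simps)

lemma inner_cvec: "inner z (w :: complex^'n) = Re (\<Sum>i\<in>UNIV. z $ i * cnj (w $ i))"
  by (simp add: inner_vec_def inner_complex_def Re_sum)

lemma inner_cmat_adj: "inner (A *v u) (v :: complex^'n) = inner u (cmat_adj A *v v)"
proof -
  have "(\<Sum>i\<in>UNIV. (A *v u) $ i * cnj (v $ i))
      = (\<Sum>i\<in>UNIV. \<Sum>j\<in>UNIV. A $ i $ j * u $ j * cnj (v $ i))"
    by (simp add: matrix_vector_mult_def sum_distrib_right)
  also have "\<dots> = (\<Sum>j\<in>UNIV. \<Sum>i\<in>UNIV. A $ i $ j * u $ j * cnj (v $ i))"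
    by (rule sum.swap)
  also have "\<dots> = (\<Sum>j\<in>UNIV. u $ j * cnj ((cmat_adj A *v v) $ j))"
    by (simp add: matrix_vector_mult_def sum_distrib_left ac_simps)
  finally show ?thesis by (simp only: inner_cvec)
qed

lemma matrix_eq_inner:
  fixes A B :: "complex^'n^'m"
  assumes "\<And>u v. inner (A *v u) v = inner (B *v u) v"
  shows "A = B"
proof (rule matrix_eq[THEN iffD2], rule allI)
  fix u
  have "inner (A *v u - B *v u) (A *v u - B *v u) = 0"
    using assms[of u "A *v u - B *v u"] by (simp add: inner_diff_left)
  then show "A *v u = B *v u" by simp
qed

lemma inner_sum_adj_mult_nonneg:
  "0 \<le> inner ((\<Sum>b\<in>S. cmat_adj (G b) ** G b) *v v) (v :: complex^'n)"
proof -
  have "inner ((\<Sum>b\<in>S. cmat_adj (G b) ** G b) *v v) v = (\<Sum>b\<in>S. inner (G b *v v) (G b *v v))"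
    by (simp add: matrix_vector_mult_sum_left inner_sum_left inner_cmat_adj
        matrix_vector_mul_assoc[symmetric])
  then show ?thesis by (simp add: sum_nonneg)
qed

section \<open>Orthogonal projections\<close>

lemma scaleR_cvec: "r *\<^sub>R (v :: complex^'n) = complex_of_real r *s v"
  by (simp add: vec_eq_iff) (simp add: scaleR_conv_of_real)

lemma complex_subspace_real_subspace:
  assumes "vec.subspace (S :: (complex^'n) set)"
  shows "subspace S"
  using assms by (simp add: subspace_def vec.subspace_def scaleR_cvec)

definition orthogonal_proj :: "'a::euclidean_space set \<Rightarrow> 'a \<Rightarrow> 'a" where
  "orthogonal_proj S x = (THE y. y \<in> S \<and> (\<forall>w\<in>S. orthogonal (x - y) w))"

lemma orthogonal_proj_unique:
  fixes S :: "'a::euclidean_space set"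
  assumes "subspace S"
  shows "\<exists>!y. y \<in> S \<and> (\<forall>w\<in>S. orthogonal (x - y) w)"
proof (rule ex_ex1I)
  obtain y z where "y \<in> span S" "\<And>w. w \<in> span S \<Longrightarrow> orthogonal z w" "x = y + z"
    using orthogonal_subspace_decomp_exists[of S x] by blast
  moreover have "span S = S" using assms by simp
  ultimately show "\<exists>y. y \<in> S \<and> (\<forall>w\<in>S. orthogonal (x - y) w)"
    by auto
next
  fix y y'
  assume "y \<in> S \<and> (\<forall>w\<in>S. orthogonal (x - y) w)" "y' \<in> S \<and> (\<forall>w\<in>S. orthogonal (x - y') w)"
  then have "orthogonal (x - y') (y - y')" "orthogonal (x - y) (y - y')"
    using assms by (simp_all add: subspace_diff)
  then have "orthogonal (y - y') (y - y')"
    by (simp add: orthogonal_def inner_diff_left)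
  then show "y = y'" by (simp add: orthogonal_self)
qed

lemma orthogonal_proj:
  assumes "subspace S"
  shows "orthogonal_proj S x \<in> S" and "w \<in> S \<Longrightarrow> orthogonal (x - orthogonal_proj S x) w"
  using theI'[OF orthogonal_proj_unique[OF assms, of x]] by (auto simp: orthogonal_proj_def)

lemma orthogonal_proj_eqI:
  assumes "subspace S" "y \<in> S" "\<And>w. w \<in> S \<Longrightarrow> orthogonal (x - y) w"
  shows "orthogonal_proj S x = y"
  unfolding orthogonal_proj_def
  by (rule the1_equality[OF orthogonal_proj_unique[OF assms(1)]]) (simp add: assms(2,3))

lemma orthogonal_proj_id: "subspace S \<Longrightarrow> x \<in> S \<Longrightarrow> orthogonal_proj S x = x"
  by (rule orthogonal_proj_eqI) (simp_all add: orthogonal_clauses)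

lemma orthogonal_proj_symmetric:
  assumes "subspace S"
  shows "inner (orthogonal_proj S u) v = inner u (orthogonal_proj S v)"
proof -
  have "inner (u - orthogonal_proj S u) (orthogonal_proj S v) = 0"
    "inner (v - orthogonal_proj S v) (orthogonal_proj S u) = 0"
    using orthogonal_proj[OF assms] by (simp_all add: orthogonal_def)
  then show ?thesis by (metis eq_iff_diff_eq_0 inner_commute inner_diff_left)
qed

lemma orthogonal_proj_complex_linear:
  fixes S :: "(complex^'n) set"
  assumes S: "vec.subspace S"
  shows "Vector_Spaces.linear (*s) (*s) (orthogonal_proj S)"
proof (simp only: Vector_Spaces.linear_iff vec.vector_space_axioms, intro conjI TrueI allI)
  let ?p = "orthogonal_proj S"
  have S_real: "subspace S" using S by (rule complex_subspace_real_subspace)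
  fix x x' c
  have regroup: "x + x' - (?p x + ?p x') = (x - ?p x) + (x' - ?p x')"
    by (simp add: algebra_simps)
  show "?p (x + x') = ?p x + ?p x'"
    by (rule orthogonal_proj_eqI[OF S_real])
      (simp_all add: regroup orthogonal_proj[OF S_real] orthogonal_clauses
        subspace_add[OF S_real orthogonal_proj(1)[OF S_real] orthogonal_proj(1)[OF S_real]])
  have "orthogonal (c *s x - c *s ?p x) w" if "w \<in> S" for w
  proof -
    have "inner (x - ?p x) (cnj c *s w) = 0"
      using orthogonal_proj(2)[OF S_real] vec.subspace_scale[OF S that] by (simp add: orthogonal_def)
    moreover have "c *s x - c *s ?p x = c *s (x - ?p x)"
      by (simp add: vec.scale_right_diff_distrib)
    ultimately show ?thesis by (simp only: orthogonal_def inner_cvec_smult)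
  qed
  then show "?p (c *s x) = c *s ?p x"
    by (rule orthogonal_proj_eqI[OF S_real vec.subspace_scale[OF S orthogonal_proj(1)[OF S_real]]])
qed

lemma orthogonal_proj_matrix:
  fixes S :: "(complex^'n) set"
  assumes S: "vec.subspace S"
  defines "P \<equiv> matrix (orthogonal_proj S)"
  shows "P ** P = P" "cmat_adj P = P" "{v. P *v v = v} = S"
proof -
  have S_real: "subspace S" using S by (rule complex_subspace_real_subspace)
  have P: "P *v x = orthogonal_proj S x" for x
    unfolding P_def using orthogonal_proj_complex_linear[OF S] by (rule matrix_works)
  show "P ** P = P"
    by (simp add: matrix_eq matrix_vector_mul_assoc[symmetric] P
        orthogonal_proj_id[OF S_real orthogonal_proj(1)[OF S_real]])
  show "cmat_adj P = P"
    by (rule matrix_eq_inner) (simp add: inner_cmat_adj P orthogonal_proj_symmetric[OF S_real])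
  show "{v. P *v v = v} = S"
  proof (intro set_eqI iffI)
    fix v assume "v \<in> {v. P *v v = v}"
    then show "v \<in> S" using orthogonal_proj(1)[OF S_real, of v] by (simp add: P)
  qed (simp add: P orthogonal_proj_id[OF S_real])
qed

lemma cmat_orthogonal_projection_unique:
  fixes P Q :: "complex^'n^'n"
  assumes "P ** P = P" "cmat_adj P = P" "Q ** Q = Q" "cmat_adj Q = Q"
    and "{v. P *v v = v} = {v. Q *v v = v}"
  shows "P = Q"
proof -
  have range_fixed: "R ** R' = R'"
    if "R' ** R' = R'" "{v. R' *v v = v} \<subseteq> {v. R *v v = v}" for R R' :: "complex^'n^'n"
  proof (rule matrix_eq[THEN iffD2], rule allI)
    fix v
    have "R' *v (R' *v v) = R' *v v" using that(1) by (simp add: matrix_vector_mul_assoc)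
    then show "(R ** R') *v v = R' *v v"
      using that(2) by (auto simp: matrix_vector_mul_assoc[symmetric])
  qed
  have "Q = cmat_adj (P ** Q)" using range_fixed[of Q P] assms by simp
  also have "\<dots> = Q ** P" using assms by (simp add: cmat_adj_mult)
  also have "\<dots> = P" using range_fixed[of P Q] assms by simp
  finally show ?thesis ..
qed

lemma eig_proj:
  fixes A :: "complex^'n^'n"
  shows "eig_proj A lam ** eig_proj A lam = eig_proj A lam"
    and "cmat_adj (eig_proj A lam) = eig_proj A lam"
    and "{v. eig_proj A lam *v v = v} = {v. A *v v = lam *s v}"
proof -
  have "vec.subspace {v. A *v v = lam *s v}"
    by (auto simp: vec.subspace_def matrix_vector_mult_smult matrix_vector_right_distrib
        vec.scale_right_distrib mult.left_commute)
  then obtain P where P: "P ** P = P" "cmat_adj P = P" "{v. P *v v = v} = {v. A *v v = lam *s v}"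
    using orthogonal_proj_matrix by blast
  have "eig_proj A lam = P"
    unfolding eig_proj_def
    by (rule the_equality) (use P in \<open>auto intro: cmat_orthogonal_projection_unique\<close>)
  with P show "eig_proj A lam ** eig_proj A lam = eig_proj A lam"
    and "cmat_adj (eig_proj A lam) = eig_proj A lam"
    and "{v. eig_proj A lam *v v = v} = {v. A *v v = lam *s v}"
    by simp_all
qed

section \<open>Orthonormal frames\<close>

definition orthonormal_frame :: "(nat \<Rightarrow> 'a::euclidean_space) \<Rightarrow> bool" where
  "orthonormal_frame e \<longleftrightarrow>
     (\<forall>i<DIM('a). \<forall>j<DIM('a). inner (e i) (e j) = (if i = j then 1 else 0))"

lemma orthonormal_frame_parseval:
  fixes e :: "nat \<Rightarrow> 'a::euclidean_space"
  assumes e: "orthonormal_frame e"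
  shows "(\<Sum>j<DIM('a). inner (e j) x * inner (e j) y) = inner x y"
proof -
  let ?B = "e ` {..<DIM('a)}"
  have on: "inner (e i) (e j) = (if i = j then 1 else 0)" if "i < DIM('a)" "j < DIM('a)" for i j
    using e that by (simp add: orthonormal_frame_def)
  have inj: "inj_on e {..<DIM('a)}"
  proof (rule inj_onI, rule ccontr)
    fix i j assume "i \<in> {..<DIM('a)}" "j \<in> {..<DIM('a)}" "e i = e j" "i \<noteq> j"
    then show False using on[of i j] on[of i i] by simp
  qed
  have orth: "pairwise orthogonal ?B" and unit: "\<And>b. b \<in> ?B \<Longrightarrow> norm b = 1"
    using e by (auto simp: orthonormal_frame_def pairwise_def orthogonal_def norm_eq_1)
  then have "independent ?B"
    by (intro pairwise_orthogonal_independent) fastforce+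
  moreover have "card ?B = DIM('a)"
    using inj by (simp add: card_image)
  ultimately have "x \<in> span ?B"
    using card_ge_dim_independent[of ?B UNIV] by auto
  then have x: "(\<Sum>b\<in>?B. inner x b *\<^sub>R b) = x"
    using orthonormal_basis_expand[OF orth unit] by simp
  have "inner x y = (\<Sum>b\<in>?B. inner x b * inner b y)"
    by (subst x[symmetric]) (simp add: inner_sum_left)
  also have "\<dots> = (\<Sum>j<DIM('a). inner (e j) x * inner (e j) y)"
    by (simp add: sum.reindex[OF inj] inner_commute[of x])
  finally show ?thesis ..
qed

lemma bilinear_sum_orthonormal_frame:
  fixes e :: "nat \<Rightarrow> 'a::euclidean_space"
  assumes h: "bilinear h" and e: "orthonormal_frame e"
  shows "(\<Sum>j<DIM('a). h (e j) (e j)) = (\<Sum>b\<in>Basis. h b b)"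
proof -
  have expand: "h x x = (\<Sum>(b, c)\<in>Basis \<times> Basis. (inner x b * inner x c) *\<^sub>R h b c)" for x
  proof -
    have "h x x = h (\<Sum>b\<in>Basis. inner x b *\<^sub>R b) (\<Sum>c\<in>Basis. inner x c *\<^sub>R c)"
      by (simp only: euclidean_representation)
    then show ?thesis
      by (simp add: bilinear_sum[OF h] bilinear_lmul[OF h] bilinear_rmul[OF h] case_prod_beta mult.commute)
  qed
  have "(\<Sum>j<DIM('a). h (e j) (e j))
      = (\<Sum>(b, c)\<in>Basis \<times> Basis.
          (\<Sum>j<DIM('a). inner (e j) b * inner (e j) c) *\<^sub>R h b c)"
    by (simp add: expand scaleR_sum_left case_prod_beta sum.swap[of _ "{..<DIM('a)}"] inner_commute)
  also have "\<dots> = (\<Sum>b\<in>Basis. \<Sum>c\<in>Basis. inner b c *\<^sub>R h b c)"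
    by (simp add: orthonormal_frame_parseval[OF e] sum.cartesian_product)
  also have "\<dots> = (\<Sum>b\<in>Basis. h b b)"
    by (simp add: inner_Basis if_distrib if_distribR sum.delta cong: if_cong)
  finally show ?thesis .
qed

section \<open>Clifford multiplication on an almost Hermitian space\<close>

locale almost_hermitian_clifford =
  fixes gam :: "'a::euclidean_space \<Rightarrow> complex^'s^'s" and J :: "'a \<Rightarrow> 'a"
  assumes clifford: "clifford_mult gam" and hermitian: "almost_hermitian J"
begin

abbreviation "gOmega \<equiv> gamma_Omega gam J"
abbreviation "g10 \<equiv> gam10 gam J"
abbreviation "g01 \<equiv> gam01 gam J"

lemma gam_add: "gam (x + y) = gam x + gam y"
  using clifford by (simp add: clifford_mult_def)

lemma gam_scaleR: "gam (r *\<^sub>R x) = r *\<^sub>R gam x"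
  using clifford by (simp add: clifford_mult_def cmat_smult_of_real)

lemma gam_square: "gam x ** gam x = - (complex_of_real ((norm x)\<^sup>2) *c mat 1)"
  using clifford by (simp add: clifford_mult_def)

lemma cmat_adj_gam: "cmat_adj (gam x) = - gam x"
  using clifford by (simp add: clifford_mult_def)

lemma linear_gam: "linear gam"
  by (rule linearI) (simp_all add: gam_add gam_scaleR)

lemma gam_sum: "gam (\<Sum>i\<in>S. r i *\<^sub>R v i) = (\<Sum>i\<in>S. complex_of_real (r i) *c gam (v i))"
  by (simp add: linear_sum[OF linear_gam] gam_scaleR cmat_smult_of_real)

lemma gam_minus: "gam (- x) = - gam x"
  using linear_neg[OF linear_gam] .

lemma linear_J: "linear J"
  using hermitian by (simp add: almost_hermitian_def)

lemma J_J [simp]: "J (J x) = - x"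
  using hermitian by (simp add: almost_hermitian_def)

lemma inner_J_J [simp]: "inner (J x) (J y) = inner x y"
  using hermitian by (simp add: almost_hermitian_def)

lemma inner_J_right: "inner x (J y) = - inner (J x) y"
  using inner_J_J[of x "J y"] by simp

lemma inner_J_self [simp]: "inner x (J x) = 0"
  using inner_J_right[of x x] by (simp add: inner_commute)

lemma norm_J [simp]: "norm (J x) = norm x"
  by (simp add: norm_eq_sqrt_inner)

lemma gam_anticomm:
  "gam x ** gam y + gam y ** gam x = complex_of_real (- 2 * inner x y) *c mat 1"
proof -
  have "gam (x + y) ** gam (x + y) = gam x ** gam x + (gam x ** gam y + gam y ** gam x) + gam y ** gam y"
    by (simp add: gam_add matrix_add_ldistrib matrix_add_rdistrib algebra_simps)
  moreover have "(norm (x + y))\<^sup>2 = (norm x)\<^sup>2 + 2 * inner x y + (norm y)\<^sup>2"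
    by (simp add: power2_norm_eq_inner algebra_simps inner_commute)
  ultimately show ?thesis
    by (simp add: gam_square vec_eq_iff algebra_simps)
qed

lemma gam_swap:
  "gam x ** gam y = - (gam y ** gam x) + complex_of_real (- 2 * inner x y) *c mat 1"
  using gam_anticomm[of x y] by (simp add: algebra_simps)

lemma gam_commutator_pair:
  "gam a ** gam b ** gam x - gam x ** (gam a ** gam b)
     = complex_of_real (2 * inner x a) *c gam b - complex_of_real (2 * inner x b) *c gam a"
proof -
  have "gam a ** gam b ** gam x = - (gam a ** gam x ** gam b) + complex_of_real (- 2 * inner b x) *c gam a"
    by (simp only: matrix_mul_assoc[symmetric] gam_swap[of b x] matrix_add_ldistrib
        matrix_minus_right cmat_smult_mult_right matrix_mul_rid)
  also have "gam a ** gam x ** gam b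
      = - (gam x ** (gam a ** gam b)) + complex_of_real (- 2 * inner a x) *c gam b"
    by (simp only: gam_swap[of a x] matrix_add_rdistrib matrix_minus_left cmat_smult_mult_left
        matrix_mul_lid matrix_mul_assoc)
  finally show ?thesis by (simp add: vec_eq_iff algebra_simps inner_commute)
qed

lemma gamma_Omega_eq: "gOmega = (1/2) *c (\<Sum>c\<in>Basis. gam (J c) ** gam c)"
proof -
  have "(\<Sum>b\<in>Basis. \<Sum>c\<in>Basis. complex_of_real (Omega J b c) *c (gam b ** gam c))
      = (\<Sum>c\<in>Basis. (\<Sum>b\<in>Basis. complex_of_real (inner (J c) b) *c gam b) ** gam c)"
    by (subst sum.swap) (simp add: matrix_sum_left cmat_smult_mult_left Omega_def inner_commute)
  also have "\<dots> = (\<Sum>c\<in>Basis. gam (J c) ** gam c)"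
    by (simp add: gam_sum[symmetric] euclidean_representation)
  finally show ?thesis by (simp add: gamma_Omega_def)
qed

lemma cmat_adj_gamma_Omega: "cmat_adj gOmega = - gOmega"
proof -
  have "cmat_adj (gam (J c) ** gam c) = - (gam (J c) ** gam c)" for c
    by (simp add: cmat_adj_mult cmat_adj_gam matrix_minus_left matrix_minus_right gam_swap[of c "J c"])
  then show ?thesis
    by (simp add: gamma_Omega_eq cmat_adj_smult cmat_adj_sum sum_negf vec_eq_iff)
qed

lemma gamma_Omega_commutator: "gOmega ** gam x - gam x ** gOmega = (-2) *c gam (J x)"
proof -
  have "(\<Sum>c\<in>Basis. gam (J c) ** gam c ** gam x - gam x ** (gam (J c) ** gam c))
      = (\<Sum>c\<in>Basis. complex_of_real (2 * inner x (J c)) *c gam c)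
        - (\<Sum>c\<in>Basis. complex_of_real (2 * inner c x) *c gam (J c))"
    by (simp add: gam_commutator_pair sum_subtractf inner_commute)
  also have "\<dots> = gam ((-2) *\<^sub>R J x) - gam (2 *\<^sub>R J x)"
  proof -
    have "(\<Sum>c\<in>Basis. (2 * inner x (J c)) *\<^sub>R c)
        = (-2) *\<^sub>R (\<Sum>c\<in>Basis. inner (J x) c *\<^sub>R c)"
      by (simp add: inner_J_right scaleR_sum_right)
    moreover have "(\<Sum>c\<in>Basis. (2 * inner c x) *\<^sub>R J c)
        = 2 *\<^sub>R J (\<Sum>c\<in>Basis. inner x c *\<^sub>R c)"
      by (simp add: linear_sum[OF linear_J] linear_scale[OF linear_J] scaleR_sum_right inner_commute)
    ultimately show ?thesis
      by (simp only: gam_sum[symmetric] euclidean_representation)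
  qed
  also have "\<dots> = (-4) *c gam (J x)"
    by (simp only: gam_scaleR cmat_smult_of_real[symmetric]) (simp add: vec_eq_iff)
  finally have "(\<Sum>c\<in>Basis. gam (J c) ** gam c ** gam x - gam x ** (gam (J c) ** gam c))
      = (-4) *c gam (J x)" .
  then show ?thesis
    by (simp only: gamma_Omega_eq cmat_smult_mult_left cmat_smult_mult_right matrix_sum_left
        matrix_sum_right sum_subtractf[symmetric] cmat_smult_diff_right[symmetric] cmat_smult_assoc)
      simp
qed

lemma gam10_plus_gam01: "g10 x + g01 x = gam x"
  by (simp add: gam10_def gam01_def vec_eq_iff algebra_simps)

lemma cmat_adj_gam10: "cmat_adj (g10 x) = - g01 x"
  by (simp only: gam10_def gam01_def cmat_adj_smult cmat_adj_diff cmat_adj_gam)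
    (simp add: vec_eq_iff algebra_simps)

lemma cmat_adj_gam01: "cmat_adj (g01 x) = - g10 x"
  by (simp only: gam10_def gam01_def cmat_adj_smult cmat_adj_add cmat_adj_gam)
    (simp add: vec_eq_iff algebra_simps)

lemma linear_gam10: "linear g10"
  by (rule linearI)
    (simp_all add: gam10_def gam_add gam_scaleR linear_add[OF linear_J] linear_scale[OF linear_J]
      vec_eq_iff algebra_simps scaleR_conv_of_real)

lemma linear_gam01: "linear g01"
  by (rule linearI)
    (simp_all add: gam01_def gam_add gam_scaleR linear_add[OF linear_J] linear_scale[OF linear_J]
      vec_eq_iff algebra_simps scaleR_conv_of_real)

lemma gam_J_swap: "gam (J x) ** gam x = - (gam x ** gam (J x))"
  using gam_swap[of x "J x"] by simp

lemma gam10_square: "g10 x ** g10 x = 0"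
  by (simp only: gam10_def cmat_smult_mult_left cmat_smult_mult_right matrix_diff_ldistrib
      matrix_diff_rdistrib cmat_smult_assoc gam_square norm_J gam_J_swap)
    (simp add: vec_eq_iff algebra_simps)

lemma gam01_square: "g01 x ** g01 x = 0"
  by (simp only: gam01_def cmat_smult_mult_left cmat_smult_mult_right matrix_add_ldistrib
      matrix_add_rdistrib cmat_smult_assoc gam_square norm_J gam_J_swap)
    (simp add: vec_eq_iff algebra_simps)

lemma gam01_mult_gam10:
  "g01 x ** g10 x = complex_of_real (- (norm x)\<^sup>2 / 2) *c mat 1 + (\<i> / 2) *c (gam (J x) ** gam x)"
  by (simp only: gam10_def gam01_def cmat_smult_mult_left cmat_smult_mult_right matrix_diff_ldistrib
      matrix_add_rdistrib cmat_smult_assoc gam_square norm_J gam_J_swap)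
    (simp add: vec_eq_iff algebra_simps)

lemma gam10_mult_gam01:
  "g10 x ** g01 x = complex_of_real (- (norm x)\<^sup>2 / 2) *c mat 1 - (\<i> / 2) *c (gam (J x) ** gam x)"
  by (simp only: gam10_def gam01_def cmat_smult_mult_left cmat_smult_mult_right matrix_add_ldistrib
      matrix_diff_rdistrib cmat_smult_assoc gam_square norm_J gam_J_swap)
    (simp add: vec_eq_iff algebra_simps)

lemma gamma_Omega_commutator_gam10: "gOmega ** g10 x - g10 x ** gOmega = (- 2 * \<i>) *c g10 x"
proof -
  have "gOmega ** g10 x - g10 x ** gOmega = (1/2) *c ((gOmega ** gam x - gam x ** gOmega)
      - \<i> *c (gOmega ** gam (J x) - gam (J x) ** gOmega))"
    by (simp only: gam10_def cmat_smult_mult_left cmat_smult_mult_right matrix_diff_ldistrib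
        matrix_diff_rdistrib) (simp add: vec_eq_iff algebra_simps)
  then show ?thesis
    by (simp add: gamma_Omega_commutator gam_minus gam10_def vec_eq_iff algebra_simps)
qed

lemma gamma_Omega_commutator_gam01: "gOmega ** g01 x - g01 x ** gOmega = (2 * \<i>) *c g01 x"
proof -
  have "gOmega ** g01 x - g01 x ** gOmega = (1/2) *c ((gOmega ** gam x - gam x ** gOmega)
      + \<i> *c (gOmega ** gam (J x) - gam (J x) ** gOmega))"
    by (simp only: gam01_def cmat_smult_mult_left cmat_smult_mult_right matrix_add_ldistrib
        matrix_add_rdistrib) (simp add: vec_eq_iff algebra_simps)
  then show ?thesis
    by (simp add: gamma_Omega_commutator gam_minus gam01_def vec_eq_iff algebra_simps)
qed

lemma sum_gam_J_mult_gam: "(\<Sum>b\<in>Basis. gam (J b) ** gam b) = 2 *c gOmega"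
  by (simp add: gamma_Omega_eq cmat_smult_assoc)

lemma sum_gam01_mult_gam10:
  "(\<Sum>b\<in>Basis. g01 b ** g10 b) = complex_of_real (- real DIM('a) / 2) *c mat 1 + \<i> *c gOmega"
proof -
  have "(\<Sum>b\<in>Basis. g01 b ** g10 b)
      = (\<Sum>b\<in>(Basis::'a set). complex_of_real (- 1 / 2) *c mat 1 + (\<i> / 2) *c (gam (J b) ** gam b))"
    by (rule sum.cong) (simp_all add: gam01_mult_gam10)
  also have "\<dots> = (of_nat DIM('a) * complex_of_real (- 1 / 2)) *c mat 1 + (\<i> / 2) *c (2 *c gOmega)"
    by (simp only: sum.distrib cmat_smult_sum[of "\<i> / 2", symmetric] cmat_smult_sum_left[symmetric]
        sum_constant sum_gam_J_mult_gam)
  finally show ?thesis by (simp add: cmat_smult_assoc)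
qed

lemma sum_gam10_mult_gam01:
  "(\<Sum>b\<in>Basis. g10 b ** g01 b) = complex_of_real (- real DIM('a) / 2) *c mat 1 - \<i> *c gOmega"
proof -
  have "(\<Sum>b\<in>Basis. g10 b ** g01 b)
      = (\<Sum>b\<in>(Basis::'a set). complex_of_real (- 1 / 2) *c mat 1 - (\<i> / 2) *c (gam (J b) ** gam b))"
    by (rule sum.cong) (simp_all add: gam10_mult_gam01)
  also have "\<dots> = (of_nat DIM('a) * complex_of_real (- 1 / 2)) *c mat 1 - (\<i> / 2) *c (2 *c gOmega)"
    by (simp only: sum_subtractf cmat_smult_sum[of "\<i> / 2", symmetric] cmat_smult_sum_left[symmetric]
        sum_constant sum_gam_J_mult_gam)
  finally show ?thesis by (simp add: cmat_smult_assoc)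
qed

lemma sum_frame_gam_mult_gam10:
  assumes "orthonormal_frame e"
  shows "(\<Sum>j<DIM('a). gam (e j) ** g10 (e j))
    = complex_of_real (- real DIM('a) / 2) *c mat 1 + \<i> *c gOmega"
proof -
  have "(\<Sum>j<DIM('a). gam (e j) ** g10 (e j)) = (\<Sum>b\<in>Basis. gam b ** g10 b)"
    using bilinear_matrix_mult_compose[OF linear_gam linear_gam10] assms
    by (rule bilinear_sum_orthonormal_frame)
  also have "\<dots> = (\<Sum>b\<in>Basis. g01 b ** g10 b)"
    by (simp add: gam10_plus_gam01[symmetric] matrix_add_rdistrib gam10_square)
  finally show ?thesis by (simp only: sum_gam01_mult_gam10)
qed

lemma sum_frame_gam_mult_gam01:
  assumes "orthonormal_frame e"
  shows "(\<Sum>j<DIM('a). gam (e j) ** g01 (e j))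
    = complex_of_real (- real DIM('a) / 2) *c mat 1 - \<i> *c gOmega"
proof -
  have "(\<Sum>j<DIM('a). gam (e j) ** g01 (e j)) = (\<Sum>b\<in>Basis. gam b ** g01 b)"
    using bilinear_matrix_mult_compose[OF linear_gam linear_gam01] assms
    by (rule bilinear_sum_orthonormal_frame)
  also have "\<dots> = (\<Sum>b\<in>Basis. g10 b ** g01 b)"
    by (simp add: gam10_plus_gam01[symmetric] matrix_add_rdistrib gam01_square)
  finally show ?thesis by (simp only: sum_gam10_mult_gam01)
qed

lemma gamma_Omega_eigenvalue_bound:
  assumes v: "gOmega *v v = (\<i> * complex_of_real t) *s v" "v \<noteq> 0"
  shows "\<bar>t\<bar> \<le> real DIM('a) / 2"
proof -
  let ?d = "real DIM('a) / 2"
  have nonneg: "0 \<le> r" if "(\<Sum>b\<in>Basis. cmat_adj (G b) ** G b) *v v = r *\<^sub>R v" for G r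
  proof -
    have "0 \<le> r * inner v v"
      using inner_sum_adj_mult_nonneg[of G Basis v] that by simp
    moreover have "0 < inner v v" using v(2) by simp
    ultimately show ?thesis by (simp add: zero_le_mult_iff)
  qed
  have "(\<Sum>b\<in>Basis. cmat_adj (g10 b) ** g10 b) *v v = (?d + t) *\<^sub>R v"
    by (simp add: cmat_adj_gam10 matrix_minus_left sum_negf sum_gam01_mult_gam10
        matrix_vector_mult_minus_left matrix_vector_mult_add_rdistrib cmat_smult_matrix_vector_mult
        v(1) scaleR_cvec vec_eq_iff algebra_simps)
  moreover have "(\<Sum>b\<in>Basis. cmat_adj (g01 b) ** g01 b) *v v = (?d - t) *\<^sub>R v"
    by (simp add: cmat_adj_gam01 matrix_minus_left sum_negf sum_gam10_mult_gam01
        matrix_vector_mult_minus_left matrix_vector_mult_diff_rdistrib cmat_smult_matrix_vector_mult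
        v(1) scaleR_cvec vec_eq_iff algebra_simps)
  ultimately show ?thesis
    using nonneg[of g10 "?d + t"] nonneg[of g01 "?d - t"] by linarith
qed

end

section \<open>The eigenspaces of the fundamental form\<close>

locale spin_decomposition = almost_hermitian_clifford gam J
  for gam :: "'a::euclidean_space \<Rightarrow> complex^'s^'s" and J +
  fixes m :: nat
  assumes dim: "DIM('a) = 2 * m"
begin

abbreviation "\<pi> \<equiv> spin_pi gam J m"

lemma spin_pi_eq_eig_proj:
  "0 \<le> k \<Longrightarrow> k \<le> int m \<Longrightarrow>
    \<pi> k = eig_proj gOmega (\<i> * of_int (int m - 2 * k))"
  by (simp add: spin_pi_def)

lemma spin_pi_eq_0: "k < 0 \<or> int m < k \<Longrightarrow> \<pi> k = 0"
  by (auto simp: spin_pi_def)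

lemma spin_pi_idem: "\<pi> k ** \<pi> k = \<pi> k"
  by (cases "0 \<le> k \<and> k \<le> int m") (auto simp: spin_pi_eq_eig_proj eig_proj spin_pi_eq_0)

lemma cmat_adj_spin_pi: "cmat_adj (\<pi> k) = \<pi> k"
  by (cases "0 \<le> k \<and> k \<le> int m") (auto simp: spin_pi_eq_eig_proj eig_proj spin_pi_eq_0)

lemma gamma_Omega_spin_pi: "gOmega ** \<pi> k = (\<i> * of_int (int m - 2 * k)) *c \<pi> k"
proof (cases "0 \<le> k \<and> k \<le> int m")
  case True
  show ?thesis
  proof (rule matrix_eq[THEN iffD2], rule allI)
    fix v
    have "\<pi> k *v (\<pi> k *v v) = \<pi> k *v v"
      by (simp add: matrix_vector_mul_assoc spin_pi_idem)
    then show "(gOmega ** \<pi> k) *v v = ((\<i> * of_int (int m - 2 * k)) *c \<pi> k) *v v"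
      using eig_proj(3)[of gOmega "\<i> * of_int (int m - 2 * k)"] True
      by (auto simp: matrix_vector_mul_assoc[symmetric] cmat_smult_matrix_vector_mult
          spin_pi_eq_eig_proj)
  qed
qed (auto simp: spin_pi_eq_0)

lemma spin_pi_gamma_Omega: "\<pi> k ** gOmega = (\<i> * of_int (int m - 2 * k)) *c \<pi> k"
proof -
  have "\<pi> k ** gOmega = - cmat_adj (gOmega ** \<pi> k)"
    by (simp add: cmat_adj_mult cmat_adj_spin_pi cmat_adj_gamma_Omega matrix_minus_right)
  then show ?thesis
    by (simp add: gamma_Omega_spin_pi cmat_adj_smult cmat_adj_spin_pi vec_eq_iff)
qed

lemma spin_pi_orthogonal:
  assumes "j \<noteq> k"
  shows "\<pi> j ** \<pi> k = 0"
proof -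
  have "\<pi> j ** gOmega ** \<pi> k = \<pi> j ** (gOmega ** \<pi> k)"
    by (simp add: matrix_mul_assoc)
  then have "(\<i> * of_int (2 * k - 2 * j)) *c (\<pi> j ** \<pi> k) = 0"
    by (simp add: gamma_Omega_spin_pi spin_pi_gamma_Omega cmat_smult_mult_left
        cmat_smult_mult_right vec_eq_iff algebra_simps)
  with assms show ?thesis
    by (simp add: vec_eq_iff)
qed

lemma spin_pi_fixes_eigenvector:
  assumes "gOmega *v w = (\<i> * of_int (int m - 2 * k)) *s w"
  shows "\<pi> k *v w = w"
proof (cases "0 \<le> k \<and> k \<le> int m")
  case True
  then show ?thesis
    using assms eig_proj(3)[of gOmega "\<i> * of_int (int m - 2 * k)"]
    by (auto simp: spin_pi_eq_eig_proj)
next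
  case False
  have "w = 0"
  proof (rule ccontr)
    assume "w \<noteq> 0"
    then have "\<bar>real_of_int (int m - 2 * k)\<bar> \<le> real m"
      using gamma_Omega_eigenvalue_bound[of w "of_int (int m - 2 * k)"] assms dim by simp
    with False show False by linarith
  qed
  then show ?thesis by simp
qed

lemma spin_pi_shift:
  assumes "gOmega ** A - A ** gOmega = (- 2 * \<i> * of_int d) *c A"
  shows "\<pi> (k + d) ** A ** \<pi> k = A ** \<pi> k"
proof (rule matrix_eq[THEN iffD2], rule allI)
  fix v
  have "gOmega ** A ** \<pi> k = A ** (gOmega ** \<pi> k) + (gOmega ** A - A ** gOmega) ** \<pi> k"
    by (simp add: matrix_diff_rdistrib matrix_mul_assoc)
  also have "\<dots> = (\<i> * of_int (int m - 2 * (k + d))) *c (A ** \<pi> k)"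
    by (simp add: assms gamma_Omega_spin_pi cmat_smult_mult_left cmat_smult_mult_right
        vec_eq_iff algebra_simps)
  finally have "gOmega *v (A ** \<pi> k *v v) = (\<i> * of_int (int m - 2 * (k + d))) *s (A ** \<pi> k *v v)"
    by (simp add: matrix_vector_mul_assoc matrix_mul_assoc cmat_smult_matrix_vector_mult)
  then show "(\<pi> (k + d) ** A ** \<pi> k) *v v = (A ** \<pi> k) *v v"
    by (simp add: spin_pi_fixes_eigenvector matrix_vector_mul_assoc[symmetric])
qed

text \<open>As \<open>\<gamma>(\<Omega>)\<close> is skew-adjoint, \<open>A\<^sup>*\<close> shifts the index by \<open>-d\<close>;
  the adjoint of the resulting one-sided identity for \<open>A\<^sup>*\<close> is
  \<open>\<pi>(k+d) A \<pi>(k) = \<pi>(k+d) A\<close>.\<close>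
lemma spin_pi_intertwines:
  assumes shift: "gOmega ** A - A ** gOmega = (- 2 * \<i> * of_int d) *c A"
  shows "\<pi> (k + d) ** A = A ** \<pi> k"
proof -
  have "gOmega ** cmat_adj A - cmat_adj A ** gOmega = (- 2 * \<i> * of_int (- d)) *c cmat_adj A"
  proof -
    have "gOmega ** cmat_adj A - cmat_adj A ** gOmega = cmat_adj (gOmega ** A - A ** gOmega)"
      by (simp add: cmat_adj_diff cmat_adj_mult cmat_adj_gamma_Omega matrix_minus_left
          matrix_minus_right)
    also have "\<dots> = (- 2 * \<i> * of_int (- d)) *c cmat_adj A"
      by (simp add: shift cmat_adj_smult vec_eq_iff)
    finally show ?thesis .
  qed
  from spin_pi_shift[OF this, of "k + d"]
  have "cmat_adj (\<pi> k ** cmat_adj A ** \<pi> (k + d)) = cmat_adj (cmat_adj A ** \<pi> (k + d))"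
    by simp
  then have "\<pi> (k + d) ** A ** \<pi> k = \<pi> (k + d) ** A"
    by (simp add: cmat_adj_mult cmat_adj_spin_pi matrix_mul_assoc)
  with spin_pi_shift[OF shift] show ?thesis by simp
qed

lemma spin_pi_gam10: "\<pi> k ** g10 x = g10 x ** \<pi> (k - 1)"
  using spin_pi_intertwines[of "g10 x" 1 "k - 1"] gamma_Omega_commutator_gam10[of x] by simp

lemma spin_pi_gam01: "\<pi> k ** g01 x = g01 x ** \<pi> (k + 1)"
  using spin_pi_intertwines[of "g01 x" "- 1" "k + 1"] gamma_Omega_commutator_gam01[of x] by simp

lemma cmat_adj_gam10_spin_pi: "cmat_adj (g10 x ** \<pi> k) = - (g01 x ** \<pi> (k + 1))"
  by (simp add: cmat_adj_mult cmat_adj_spin_pi cmat_adj_gam10 matrix_minus_right spin_pi_gam01)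

lemma cmat_adj_gam01_spin_pi: "cmat_adj (g01 x ** \<pi> k) = - (g10 x ** \<pi> (k - 1))"
  by (simp add: cmat_adj_mult cmat_adj_spin_pi cmat_adj_gam01 matrix_minus_right spin_pi_gam10)

lemma spin_pi_gam: "\<pi> k ** gam x = g10 x ** \<pi> (k - 1) + g01 x ** \<pi> (k + 1)"
  by (simp add: gam10_plus_gam01[symmetric] matrix_add_ldistrib spin_pi_gam10 spin_pi_gam01)

lemma sum_frame_gam_mult_gam10_spin_pi:
  assumes "orthonormal_frame e"
  shows "(\<Sum>j<DIM('a). gam (e j) ** g10 (e j)) ** \<pi> k = of_int (2 * (k - int m)) *c \<pi> k"
  unfolding sum_frame_gam_mult_gam10[OF assms]
  by (simp add: matrix_add_rdistrib cmat_smult_mult_left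
      gamma_Omega_spin_pi dim vec_eq_iff algebra_simps)

lemma sum_frame_gam_mult_gam01_spin_pi:
  assumes "orthonormal_frame e"
  shows "(\<Sum>j<DIM('a). gam (e j) ** g01 (e j)) ** \<pi> k = of_int (- 2 * k) *c \<pi> k"
  unfolding sum_frame_gam_mult_gam01[OF assms]
  by (simp add: matrix_diff_rdistrib cmat_smult_mult_left
      gamma_Omega_spin_pi dim vec_eq_iff algebra_simps)

end

lemma alpha_plus_beta:
  assumes "1 < m"
  shows "alpha1 m + beta1 m = alpha2 m + beta2 m"
proof -
  let ?p = "sqrt (real m + 1)" and ?q = "sqrt (real m - 1)"
  have pos: "?p > 0" "?q > 0" and sq: "?p * ?p = real m + 1" "?q * ?q = real m - 1"
    using assms by simp_all
  have "(real m + 1) * alpha1 m = (?p * ?p) * (?q / ?p)"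
    by (simp only: alpha1_def real_sqrt_divide sq)
  also have "\<dots> = (?q * ?q) * (?p / ?q)"
    using pos by (simp add: field_simps del: real_sqrt_mult_self)
  also have "\<dots> = (real m - 1) * alpha2 m"
    by (simp only: alpha2_def real_sqrt_divide sq)
  finally show ?thesis
    by (simp add: beta1_def beta2_def algebra_simps)
qed

locale even_spin_decomposition = spin_decomposition gam J "2 * n"
  for gam :: "'a::euclidean_space \<Rightarrow> complex^'s^'s" and J and n :: nat
begin

abbreviation "a1 \<equiv> complex_of_real (alpha1 (2 * n))"
abbreviation "a2 \<equiv> complex_of_real (alpha2 (2 * n))"
abbreviation "b1 \<equiv> complex_of_real (beta1 (2 * n))"
abbreviation "b2 \<equiv> complex_of_real (beta2 (2 * n))"
abbreviation "c0 \<equiv> - \<i> * of_nat (2 * n + 1)"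

lemma frakT_eq:
  "frakT gam J n X = \<i> *c (a1 *c (g10 X ** \<pi> (int n - 1)) + a2 *c (g01 X ** \<pi> (int n))
    + b1 *c (g10 X ** \<pi> (int n - 2)) + b2 *c (g01 X ** \<pi> (int n + 1)))"
  by (simp add: frakT_def Let_def)

lemma calT_eq:
  "calT gam J n = c0 *c mat 1 + (\<i> * b1) *c \<pi> (int n - 1) + (\<i> * b2) *c \<pi> (int n)"
  by (simp add: calT_def Let_def)

lemma selfadjoint_frakT_plus_gam_calT:
  assumes "1 \<le> n"
  shows "selfadjoint (frakT gam J n X + gam X ** calT gam J n)"
proof -
  have b2: "b2 = a1 + b1 - a2"
    using alpha_plus_beta[of "2 * n"] assms by (simp flip: of_real_add of_real_diff)
  have adj_frakT: "cmat_adj (frakT gam J n X)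
      = \<i> *c (a1 *c (g01 X ** \<pi> (int n)) + a2 *c (g10 X ** \<pi> (int n - 1))
      + b1 *c (g01 X ** \<pi> (int n - 1)) + b2 *c (g10 X ** \<pi> (int n)))"
    by (simp only: frakT_eq cmat_adj_add cmat_adj_smult cmat_adj_gam10_spin_pi
        cmat_adj_gam01_spin_pi diff_add_cancel add_diff_cancel)
      (simp add: vec_eq_iff algebra_simps)
  have adj_gam_calT: "cmat_adj (gam X ** calT gam J n) = calT gam J n ** gam X"
  proof -
    have "cmat_adj (calT gam J n) = - calT gam J n"
      by (simp add: calT_eq cmat_adj_add cmat_adj_smult cmat_adj_spin_pi vec_eq_iff)
    then show ?thesis
      by (simp add: cmat_adj_mult cmat_adj_gam matrix_minus_left matrix_minus_right)
  qed
  have calT_gam: "calT gam J n ** gam X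
      = c0 *c gam X + (\<i> * b1) *c (g10 X ** \<pi> (int n - 2) + g01 X ** \<pi> (int n))
      + (\<i> * b2) *c (g10 X ** \<pi> (int n - 1) + g01 X ** \<pi> (int n + 1))"
    by (simp add: calT_eq matrix_add_rdistrib cmat_smult_mult_left spin_pi_gam)
  have gam_calT: "gam X ** calT gam J n
      = c0 *c gam X + (\<i> * b1) *c (g10 X ** \<pi> (int n - 1) + g01 X ** \<pi> (int n - 1))
      + (\<i> * b2) *c (g10 X ** \<pi> (int n) + g01 X ** \<pi> (int n))"
    by (simp add: calT_eq matrix_add_ldistrib cmat_smult_mult_right gam10_plus_gam01[symmetric]
        matrix_add_rdistrib cmat_smult_add_right)
  show ?thesis
    unfolding selfadjoint_def cmat_adj_add adj_frakT adj_gam_calT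
    unfolding calT_gam gam_calT frakT_eq b2
    by (simp add: vec_eq_iff algebra_simps)
qed

lemma sum_frame_gam_mult_frakT:
  assumes e: "orthonormal_frame e"
  shows "(\<Sum>j<DIM('a). gam (e j) ** frakT gam J n (e j))
    = calT gam J n ** prV gam J n
      - (\<i> * complex_of_real (beta1 (2 * n) * (real (2 * n) + 4))) *c \<pi> (int n - 2)
      - (\<i> * complex_of_real (beta2 (2 * n) * (real (2 * n) + 2))) *c \<pi> (int n + 1)"
proof -
  let ?S10 = "\<Sum>j<DIM('a). gam (e j) ** g10 (e j)"
    and ?S01 = "\<Sum>j<DIM('a). gam (e j) ** g01 (e j)"
  have "(\<Sum>j<DIM('a). gam (e j) ** frakT gam J n (e j))
      = \<i> *c (a1 *c (?S10 ** \<pi> (int n - 1)) + a2 *c (?S01 ** \<pi> (int n))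
        + b1 *c (?S10 ** \<pi> (int n - 2)) + b2 *c (?S01 ** \<pi> (int n + 1)))"
    by (simp add: frakT_eq matrix_add_ldistrib cmat_smult_mult_right matrix_sum_left
        cmat_smult_add_right cmat_smult_mult_left matrix_mul_assoc sum.distrib cmat_smult_sum)
  also have "\<dots> = \<i> *c (a1 *c (of_int (2 * (int n - 1 - int (2 * n))) *c \<pi> (int n - 1))
        + a2 *c (of_int (- 2 * int n) *c \<pi> (int n))
        + b1 *c (of_int (2 * (int n - 2 - int (2 * n))) *c \<pi> (int n - 2))
        + b2 *c (of_int (- 2 * (int n + 1)) *c \<pi> (int n + 1)))"
    by (simp only: sum_frame_gam_mult_gam10_spin_pi[OF e] sum_frame_gam_mult_gam01_spin_pi[OF e])
  finally have sum_eq: "(\<Sum>j<DIM('a). gam (e j) ** frakT gam J n (e j)) = \<dots>" .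
  have prV_eq: "calT gam J n ** prV gam J n
      = (c0 + \<i> * b1) *c \<pi> (int n - 1) + (c0 + \<i> * b2) *c \<pi> (int n)"
  proof -
    have "\<pi> (int n - 1) ** \<pi> (int n) = 0" "\<pi> (int n) ** \<pi> (int n - 1) = 0"
      by (simp_all add: spin_pi_orthogonal)
    then show ?thesis
      by (simp only: calT_eq prV_def matrix_add_ldistrib matrix_add_rdistrib cmat_smult_mult_left
          matrix_mul_lid spin_pi_idem) (simp add: vec_eq_iff algebra_simps)
  qed
  show ?thesis
    unfolding sum_eq prV_eq by (simp add: beta1_def beta2_def vec_eq_iff algebra_simps)
qed

end

theorem mainTheorem5:
  fixes n :: nat
    and J :: "'a::euclidean_space \<Rightarrow> 'a"
    and gam :: "'a \<Rightarrow> complex^'s^'s"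
  assumes "n \<ge> 1"
    and "DIM('a) = 2 * (2 * n)"
    and "CARD('s) = 2 ^ (2 * n)"
    and "almost_hermitian J"
    and "clifford_mult gam"
  shows "(\<forall>X. selfadjoint (frakT gam J n X + gam X ** calT gam J n))
    \<and> (\<forall>e :: nat \<Rightarrow> 'a.
         (\<forall>i<2 * (2 * n). \<forall>j<2 * (2 * n). inner (e i) (e j) = (if i = j then 1 else 0)) \<longrightarrow>
         (\<Sum>j<2 * (2 * n). gam (e j) ** frakT gam J n (e j))
           = calT gam J n ** prV gam J n
             - (\<i> * complex_of_real (beta1 (2 * n) * (real (2 * n) + 4))) *c spin_pi gam J (2 * n) (int n - 2)
             - (\<i> * complex_of_real (beta2 (2 * n) * (real (2 * n) + 2))) *c spin_pi gam J (2 * n) (int n + 1))"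
proof -
  interpret even_spin_decomposition gam J n
    using assms by unfold_locales auto
  show ?thesis
  proof (intro conjI allI impI)
    show "selfadjoint (frakT gam J n X + gam X ** calT gam J n)" for X
      using assms(1) by (rule selfadjoint_frakT_plus_gam_calT)
  next
    fix e :: "nat \<Rightarrow> 'a"
    assume "\<forall>i<2 * (2 * n). \<forall>j<2 * (2 * n). inner (e i) (e j) = (if i = j then 1 else 0)"
    then have "orthonormal_frame e"
      using assms(2) by (simp add: orthonormal_frame_def)
    from sum_frame_gam_mult_frakT[OF this]
    show "(\<Sum>j<2 * (2 * n). gam (e j) ** frakT gam J n (e j))
        = calT gam J n ** prV gam J n
          - (\<i> * complex_of_real (beta1 (2 * n) * (real (2 * n) + 4))) *c \<pi> (int n - 2)
          - (\<i> * complex_of_real (beta2 (2 * n) * (real (2 * n) + 2))) *c \<pi> (int n + 1)"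
      by (simp only: assms(2))
  qed
qed

end
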